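(* Let $1\le n\le m$ be integers and let $U=(U_{j,k})_{j,k=1}^m$ be an $m\times m$ unitary matrix. Let $U^{n\times n}=(U_{j,k})_{j,k=1}^n$ denote its upper-left $n\times n$ submatrix. Then $$\left(\frac{2}{\pi}\right)^m \int_{\mathbb{C}^m} e^{-2|\vec\alpha|^2}\prod_{j=1}^n\left(4\left|\sum_{k=1}^m \alpha_k U_{k,j}\right|^2-1\right)\prod_{j=1}^n\left(|\alpha_j|^2-\frac12\right)\,d^2\vec\alpha \;=\;\left|\mathrm{perm}\big(U^{n\times n}\big)\right|^2 .$$ (In particular, since computing permanents is $\#\mathbf{P}$-hard in the worst case, exactly evaluating integrals of this form is $\#\mathbf{P}$-hard in the worst case.)
   Context: Here $\vec\alpha=(\alpha_1,\dots,\alpha_m)\in\mathbb{C}^m$, $|\vec\alpha|^2=\sum_{k=1}^m|\alpha_k|^2$, and $d^2\vec\alpha=d^2\alpha_1\cdots d^2\alpha_m$ where $d^2\alpha=d(\mathrm{Re}\,\alpha)\,d(\mathrm{Im}\,\alpha)$ is Lebesgue measure on $\mathbb{C}\cong\mathbb{R}^2$. The permanent of an $n\times n$ matrix $A$ is $\mathrm{perm}(A)=\sum_{\sigma\in S_n}\prod_{j=1}^n A_{j,\sigma(j)}$. *)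

theory Defs
  imports "HOL-Analysis.Analysis"
begin

definition unitary_mat :: "nat \<Rightarrow> (nat \<Rightarrow> nat \<Rightarrow> complex) \<Rightarrow> bool" where
  "unitary_mat m U \<longleftrightarrow>
     (\<forall>j\<in>{1..m}. \<forall>l\<in>{1..m}. (\<Sum>k=1..m. U j k * cnj (U l k)) = (if j = l then 1 else 0)) \<and>
     (\<forall>j\<in>{1..m}. \<forall>l\<in>{1..m}. (\<Sum>k=1..m. cnj (U k j) * U k l) = (if j = l then 1 else 0))"

definition perm_sub :: "nat \<Rightarrow> (nat \<Rightarrow> nat \<Rightarrow> complex) \<Rightarrow> complex" where
  "perm_sub n A = (\<Sum>\<sigma> \<in> {\<sigma>. \<sigma> permutes {1..n}}. \<Prod>j=1..n. A j (\<sigma> j))"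

end

theory Submission
  imports Defs "HOL-Probability.Distributions"
begin

text \<open>
  Expanding the products turns the integrand into a linear combination of products, over the
  coordinates, of Gaussian moments. For the weight \<open>(2/\<pi>) exp (-2 |z|\<^sup>2)\<close> the moment of
  \<open>z\<^sup>a (cnj z)\<^sup>b\<close> is \<open>a! / 2\<^sup>a\<close> if \<open>a = b\<close> and \<open>0\<close> otherwise, so the factor
  \<open>|\<alpha>\<^sub>j|\<^sup>2 - 1/2\<close> kills every term in which \<open>\<alpha>\<^sub>j\<close>, \<open>j \<le> n\<close>, is not chosen
  equally often, and at least once, from the column sums \<open>\<Sum>\<^sub>k \<alpha>\<^sub>k U\<^sub>k\<^sub>j\<close> and from their
  conjugates. Counting shows that the surviving terms are indexed by pairs of permutations of
  \<open>{1..n}\<close>; each contributes \<open>4\<^sup>-\<^sup>n\<close>, cancelling the \<open>4\<^sup>n\<close> of the expansion, and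
  together they sum to \<open>perm \<cdot> cnj perm\<close>.
\<close>

section \<open>Moments of the complex Gaussian weight\<close>

definition gauss_moment :: "nat \<Rightarrow> real" where
  "gauss_moment p = (if even p then fact p / (8 ^ (p div 2) * fact (p div 2)) else 0)"

lemma has_bochner_integral_gauss_moment:
  "has_bochner_integral lborel (\<lambda>x. normal_density 0 (1/2) x * x ^ p) (gauss_moment p)"
proof (cases "even p")
  case True
  then obtain k where "p = 2 * k" by (elim evenE)
  with normal_moment_even[of "1/2" 0 k] show ?thesis
    by (simp add: gauss_moment_def power2_eq_square)
next
  case False
  then obtain k where "p = 2 * k + 1" by (elim oddE)
  with normal_moment_odd[of "1/2" 0 k] show ?thesis
    by (simp add: gauss_moment_def)
qed

definition gauss_weight :: "complex \<Rightarrow> real" where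
  "gauss_weight z = 2 / pi * exp (- 2 * (cmod z)\<^sup>2)"

lemma borel_measurable_gauss_weight[measurable]: "gauss_weight \<in> borel_measurable borel"
  unfolding gauss_weight_def by measurable

lemma gauss_weight_Complex:
  "gauss_weight (Complex x y) = normal_density 0 (1/2) x * normal_density 0 (1/2) y"
proof -
  have "sqrt (2 * pi * (1/2)\<^sup>2) * sqrt (2 * pi * (1/2)\<^sup>2) = pi / 2"
    by (simp add: power2_eq_square)
  then show ?thesis
    by (simp add: gauss_weight_def normal_density_def cmod_def exp_add[symmetric] power2_eq_square
        field_simps)
qed

lemma has_bochner_integral_gauss_weight_Re_Im:
  "has_bochner_integral lborel (\<lambda>z. gauss_weight z * Re z ^ p * Im z ^ q)
     (gauss_moment p * gauss_moment q)"
proof -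
  interpret product_sigma_finite "\<lambda>_::complex. lborel :: real measure"
    by unfold_locales
  define f where "f b t = normal_density 0 (1/2) t * t ^ (if b = 1 then p else q)" for b :: complex and t
  have f_int: "integrable lborel (f b)" for b
    unfolding f_def by (rule integrable.intros[OF has_bochner_integral_gauss_moment])
  have "has_bochner_integral (\<Pi>\<^sub>M b\<in>Basis. lborel) (\<lambda>x. \<Prod>b\<in>Basis. f b (x b))
      (\<Prod>b\<in>Basis. integral\<^sup>L lborel (f b))"
    by (simp add: has_bochner_integral_iff product_integrable_prod product_integral_prod f_int)
  moreover have "(\<Prod>b\<in>Basis. integral\<^sup>L lborel (f b)) = gauss_moment p * gauss_moment q"
    using has_bochner_integral_integral_eq[OF has_bochner_integral_gauss_moment]
    by (simp add: Basis_complex_def f_def[abs_def])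
  moreover have "(\<Prod>b\<in>Basis. f b (x b)) =
      (\<lambda>z. gauss_weight z * Re z ^ p * Im z ^ q) (\<Sum>b\<in>Basis. x b *\<^sub>R b)" for x :: "complex \<Rightarrow> real"
  proof -
    have "(\<Sum>b\<in>Basis. x b *\<^sub>R b) = Complex (x 1) (x \<i>)"
      by (simp add: Basis_complex_def complex_eq_iff)
    then show ?thesis
      by (simp add: Basis_complex_def f_def gauss_weight_Complex)
  qed
  ultimately have "has_bochner_integral (\<Pi>\<^sub>M b\<in>Basis. lborel)
      (\<lambda>x. (\<lambda>z. gauss_weight z * Re z ^ p * Im z ^ q) (\<Sum>b\<in>Basis. x b *\<^sub>R b))
      (gauss_moment p * gauss_moment q)"
    by simp
  then show ?thesis
    by (subst lborel_eq) (rule has_bochner_integral_distr; measurable)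
qed

lemma binomial_sum_gauss_moment:
  fixes c1 c2 :: "'a :: {comm_ring_1, real_algebra_1}"
  shows "(\<Sum>r\<le>N. of_nat (N choose r) * c1 ^ r * c2 ^ (N - r) * of_real (gauss_moment r * gauss_moment (N - r)))
     = (if even N then of_real (gauss_moment N) * (c1\<^sup>2 + c2\<^sup>2) ^ (N div 2) else 0)"
proof (cases "even N")
  case False
  have vanish: "of_nat (N choose r) * c1 ^ r * c2 ^ (N - r) *
      of_real (gauss_moment r * gauss_moment (N - r)) = (0 :: 'a)" if "r \<in> {..N}" for r
  proof -
    have "gauss_moment r * gauss_moment (N - r) = 0"
      using False that by (cases "even r") (auto simp: gauss_moment_def)
    then show ?thesis by (simp only: of_real_0 mult_zero_right)
  qed
  have "(\<Sum>r\<le>N. of_nat (N choose r) * c1 ^ r * c2 ^ (N - r) *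
      of_real (gauss_moment r * gauss_moment (N - r))) = (0 :: 'a)"
    by (intro sum.neutral ballI vanish)
  with False show ?thesis by simp
next
  case True
  then obtain h where h: "N = 2 * h" by (elim evenE)
  define f where "f r = of_nat (N choose r) * c1 ^ r * c2 ^ (N - r) *
    (of_real (gauss_moment r * gauss_moment (N - r)) :: 'a)" for r
  have "(\<Sum>r\<le>N. f r) = (\<Sum>r\<in>(\<lambda>i. 2 * i) ` {..h}. f r)"
  proof (rule sum.mono_neutral_right)
    show "\<forall>r\<in>{..N} - (\<lambda>i. 2 * i) ` {..h}. f r = 0"
      using h by (auto simp: f_def gauss_moment_def elim!: evenE)
  qed (use h in auto)
  also have "\<dots> = (\<Sum>i\<le>h. f (2 * i))"
    by (subst sum.reindex) (auto simp: inj_on_def)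
  also have "\<dots> = (\<Sum>i\<le>h. of_real (gauss_moment N) * (of_nat (h choose i) * (c1\<^sup>2) ^ i * (c2\<^sup>2) ^ (h - i)))"
  proof (rule sum.cong[OF refl])
    fix i assume "i \<in> {..h}"
    then have i: "i \<le> h" by simp
    have N_minus: "N - 2 * i = 2 * (h - i)" and K_minus: "h * 2 - i * 2 = (h - i) * 2"
      using h i by simp_all
    have moments: "gauss_moment (2 * i) * gauss_moment (2 * (h - i)) * real (N choose (2 * i))
        = gauss_moment N * real (h choose i)"
      using i h by (simp add: gauss_moment_def binomial_fact N_minus K_minus field_simps
          power_add[symmetric])
    have "f (2 * i) = of_real (gauss_moment (2 * i) * gauss_moment (2 * (h - i)) * real (N choose (2 * i)))
        * (c1\<^sup>2) ^ i * (c2\<^sup>2) ^ (h - i)"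
      unfolding f_def N_minus power_mult by (simp add: mult_ac)
    then show "f (2 * i) = of_real (gauss_moment N) * (of_nat (h choose i) * (c1\<^sup>2) ^ i * (c2\<^sup>2) ^ (h - i))"
      unfolding moments by (simp add: mult_ac)
  qed
  also have "\<dots> = of_real (gauss_moment N) * (c1\<^sup>2 + c2\<^sup>2) ^ h"
    by (simp add: binomial_ring sum_distrib_left)
  finally show ?thesis
    using True h by (simp add: f_def)
qed

lemma has_bochner_integral_gauss_weight_linear_power:
  fixes c1 c2 :: complex
  shows "has_bochner_integral lborel
     (\<lambda>z. of_real (gauss_weight z) * (c1 * of_real (Re z) + c2 * of_real (Im z)) ^ N)
     (if even N then of_real (gauss_moment N) * (c1\<^sup>2 + c2\<^sup>2) ^ (N div 2) else 0)"
proof -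
  have "has_bochner_integral lborel
      (\<lambda>z. \<Sum>r\<le>N. of_nat (N choose r) * c1 ^ r * c2 ^ (N - r) *
         of_real (gauss_weight z * Re z ^ r * Im z ^ (N - r)))
      (\<Sum>r\<le>N. of_nat (N choose r) * c1 ^ r * c2 ^ (N - r) *
         of_real (gauss_moment r * gauss_moment (N - r)))"
    by (intro has_bochner_integral_sum has_bochner_integral_mult_right has_bochner_integral_of_real
        has_bochner_integral_gauss_weight_Re_Im)
  moreover have "(\<Sum>r\<le>N. of_nat (N choose r) * c1 ^ r * c2 ^ (N - r) *
         of_real (gauss_weight z * Re z ^ r * Im z ^ (N - r)))
      = of_real (gauss_weight z) * (c1 * of_real (Re z) + c2 * of_real (Im z)) ^ N" for z
    by (simp add: binomial_ring sum_distrib_left power_mult_distrib mult_ac)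
  ultimately show ?thesis
    by (simp only: binomial_sum_gauss_moment)
qed

lemma integrable_gauss_weight_monomial:
  "integrable lborel (\<lambda>z. of_real (gauss_weight z) * z ^ a * cnj z ^ b)"
proof -
  have "of_real (gauss_weight z) * z ^ a * cnj z ^ b =
      (\<Sum>r\<le>a. \<Sum>t\<le>b. of_nat (a choose r) * of_nat (b choose t) * \<i> ^ (a - r) * (- \<i>) ^ (b - t) *
        of_real (gauss_weight z * Re z ^ (r + t) * Im z ^ (a - r + (b - t))))" for z
  proof -
    have monomial_expansion: "z ^ a * cnj z ^ b =
        (\<Sum>r\<le>a. of_nat (a choose r) * of_real (Re z) ^ r * (\<i> * of_real (Im z)) ^ (a - r)) *
        (\<Sum>t\<le>b. of_nat (b choose t) * of_real (Re z) ^ t * ((- \<i>) * of_real (Im z)) ^ (b - t))"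
    proof -
      have "of_real (Re z) + \<i> * of_real (Im z) = z" "of_real (Re z) + (- \<i>) * of_real (Im z) = cnj z"
        by (simp_all add: complex_eq_iff)
      then show ?thesis
        unfolding binomial_ring[symmetric] by (simp only:)
    qed
    have "of_real (gauss_weight z) * z ^ a * cnj z ^ b =
        (\<Sum>r\<le>a. \<Sum>t\<le>b. of_real (gauss_weight z) *
          ((of_nat (a choose r) * of_real (Re z) ^ r * (\<i> * of_real (Im z)) ^ (a - r)) *
           (of_nat (b choose t) * of_real (Re z) ^ t * ((- \<i>) * of_real (Im z)) ^ (b - t))))"
      unfolding mult.assoc[of "of_real (gauss_weight z)"] monomial_expansion
      by (simp only: sum_product) (simp only: sum_distrib_left)
    also have "\<dots> = (\<Sum>r\<le>a. \<Sum>t\<le>b. of_nat (a choose r) * of_nat (b choose t) * \<i> ^ (a - r) * (- \<i>) ^ (b - t) *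
        of_real (gauss_weight z * Re z ^ (r + t) * Im z ^ (a - r + (b - t))))"
      by (intro sum.cong refl) (simp only: of_real_mult of_real_power power_mult_distrib power_add mult_ac)
    finally show ?thesis .
  qed
  then show ?thesis
    by (simp only: integrable.intros[OF has_bochner_integral_gauss_weight_Re_Im]
        integrable_of_real integrable_mult_right Bochner_Integration.integrable_sum)
qed

text \<open>
  \<open>s z + cnj z = (s + 1) Re z + \<i> (s - 1) Im z\<close> is a linear form in two independent
  Gaussians, so its moments depend on \<open>s\<close> only through \<open>(s + 1)\<^sup>2 - (s - 1)\<^sup>2 = 4 s\<close>;
  comparing coefficients of \<open>s\<close> isolates the moments of \<open>z\<^sup>a cnj z\<^sup>b\<close>.
\<close>

lemma gauss_weight_monomial_generating_polynomial:
  fixes s :: complex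
  shows "(\<Sum>a\<le>N. of_nat (N choose a) *
            integral\<^sup>L lborel (\<lambda>z. of_real (gauss_weight z) * z ^ a * cnj z ^ (N - a)) * s ^ a)
     = (if even N then of_real (gauss_moment N) * 4 ^ (N div 2) else 0) * s ^ (N div 2)"
proof -
  have "(\<Sum>a\<le>N. of_nat (N choose a) *
            integral\<^sup>L lborel (\<lambda>z. of_real (gauss_weight z) * z ^ a * cnj z ^ (N - a)) * s ^ a)
      = (\<Sum>a\<le>N. integral\<^sup>L lborel (\<lambda>z. (of_nat (N choose a) * s ^ a) *
            (of_real (gauss_weight z) * z ^ a * cnj z ^ (N - a))))"
    unfolding integral_mult_right_zero by (simp add: mult_ac)
  also have "\<dots> = integral\<^sup>L lborel (\<lambda>z. \<Sum>a\<le>N. (of_nat (N choose a) * s ^ a) *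
            (of_real (gauss_weight z) * z ^ a * cnj z ^ (N - a)))"
    by (rule Bochner_Integration.integral_sum[symmetric])
       (intro integrable_mult_right integrable_gauss_weight_monomial)
  also have "\<dots> = integral\<^sup>L lborel (\<lambda>z. of_real (gauss_weight z) *
            ((s + 1) * of_real (Re z) + (\<i> * (s - 1)) * of_real (Im z)) ^ N)"
  proof (rule Bochner_Integration.integral_cong[OF refl])
    fix z :: complex
    have "(s + 1) * of_real (Re z) + (\<i> * (s - 1)) * of_real (Im z) = s * z + cnj z"
      by (simp add: complex_eq_iff algebra_simps)
    then show "(\<Sum>a\<le>N. (of_nat (N choose a) * s ^ a) * (of_real (gauss_weight z) * z ^ a * cnj z ^ (N - a)))
        = of_real (gauss_weight z) * ((s + 1) * of_real (Re z) + (\<i> * (s - 1)) * of_real (Im z)) ^ N"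
      by (simp add: binomial_ring sum_distrib_left power_mult_distrib mult_ac)
  qed
  also have "\<dots> = (if even N then of_real (gauss_moment N) * ((s + 1)\<^sup>2 + (\<i> * (s - 1))\<^sup>2) ^ (N div 2) else 0)"
    by (rule has_bochner_integral_integral_eq[OF has_bochner_integral_gauss_weight_linear_power])
  also have "(s + 1)\<^sup>2 + (\<i> * (s - 1))\<^sup>2 = 4 * s"
    by (simp add: power2_eq_square algebra_simps)
  finally show ?thesis
    by (simp add: power_mult_distrib)
qed

lemma polyfun_eq_monomial_coeff:
  fixes c :: "nat \<Rightarrow> 'a::{comm_ring,real_normed_div_algebra}"
  assumes "\<And>z. (\<Sum>i\<le>n. c i * z ^ i) = d * z ^ m" "m \<le> n" "k \<le> n"
  shows "c k = (if k = m then d else 0)"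
proof -
  have "(\<Sum>i\<le>n. (c i - (if i = m then d else 0)) * z ^ i) = 0" for z
  proof -
    have "(\<Sum>i\<le>n. (if i = m then d else 0) * z ^ i) = (\<Sum>i\<le>n. if i = m then d * z ^ m else 0)"
      by (rule sum.cong) auto
    also have "\<dots> = d * z ^ m"
      using assms(2) by simp
    finally show ?thesis
      using assms(1) by (simp add: left_diff_distrib sum_subtractf)
  qed
  then show ?thesis
    using polyfun_eq_0[of "\<lambda>i. c i - (if i = m then d else 0)" n] assms(3) by auto
qed

lemma integral_gauss_weight_monomial:
  "integral\<^sup>L lborel (\<lambda>z. of_real (gauss_weight z) * z ^ a * cnj z ^ b)
     = (if a = b then of_real (fact a / 2 ^ a) else 0)"
proof -
  define N where "N = a + b"
  define M where "M k = integral\<^sup>L lborel (\<lambda>z. of_real (gauss_weight z) * z ^ k * cnj z ^ (N - k))" for k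
  define d :: complex where "d = (if even N then of_real (gauss_moment N) * 4 ^ (N div 2) else 0)"
  have coeff: "of_nat (N choose a) * M a = (if a = N div 2 then d else 0)"
    using polyfun_eq_monomial_coeff[of "\<lambda>k. of_nat (N choose k) * M k" N d "N div 2" a]
      gauss_weight_monomial_generating_polynomial[of N]
    by (simp add: M_def d_def N_def)
  have M_a: "M a = integral\<^sup>L lborel (\<lambda>z. of_real (gauss_weight z) * z ^ a * cnj z ^ b)"
    by (simp add: M_def N_def)
  have choose_nonzero: "(of_nat (N choose a) :: complex) \<noteq> 0"
    by (simp add: N_def)
  show ?thesis
  proof (cases "a = b")
    case True
    then have N: "N = 2 * a" by (simp add: N_def)
    have "gauss_moment N * 4 ^ a = real (N choose a) * (fact a / 2 ^ a)"
    proof -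
      have "(8::real) ^ a = 4 ^ a * 2 ^ a"
        by (simp flip: power_mult_distrib)
      then show ?thesis
        by (simp add: N gauss_moment_def binomial_fact field_simps)
    qed
    then have "complex_of_real (gauss_moment N * 4 ^ a) = of_real (real (N choose a) * (fact a / 2 ^ a))"
      by (rule arg_cong)
    then have "of_nat (N choose a) * M a = of_nat (N choose a) * of_real (fact a / 2 ^ a)"
      using coeff by (simp add: N d_def)
    with choose_nonzero have "M a = of_real (fact a / 2 ^ a)"
      by (metis mult_left_cancel)
    then show ?thesis
      using True M_a by simp
  next
    case False
    then have "a \<noteq> N div 2 \<or> odd N"
      unfolding N_def by presburger
    then have "(if a = N div 2 then d else 0) = 0"
      by (auto simp: d_def)
    with coeff choose_nonzero have "M a = 0"
      by (simp only: mult_eq_0_iff) simp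
    then show ?thesis
      using False M_a by simp
  qed
qed

lemma has_bochner_integral_gauss_weight_monomial:
  "has_bochner_integral lborel (\<lambda>z. of_real (gauss_weight z) * z ^ a * cnj z ^ b)
     (if a = b then of_real (fact a / 2 ^ a) else 0)"
  using integrable_gauss_weight_monomial integral_gauss_weight_monomial
  by (simp add: has_bochner_integral_iff)

text \<open>
  The factor of a term of the expanded integrand that depends on one coordinate \<open>z = \<alpha>\<^sub>k\<close>:
  \<open>a\<close> and \<open>b\<close> count how often \<open>\<alpha>\<^sub>k\<close> was chosen from the column sums and from their
  conjugates, and \<open>c\<close> records whether \<open>k \<le> n\<close>, i.e.\ whether \<open>|\<alpha>\<^sub>k|\<^sup>2 - 1/2\<close> is present.
\<close>

definition site_integrand :: "bool \<Rightarrow> nat \<Rightarrow> nat \<Rightarrow> complex \<Rightarrow> complex" where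
  "site_integrand c a b z =
     of_real (gauss_weight z) * z ^ a * cnj z ^ b * (if c then z * cnj z - 1 / 2 else 1)"

definition site_moment :: "bool \<Rightarrow> nat \<Rightarrow> nat \<Rightarrow> complex" where
  "site_moment c a b =
     (if a \<noteq> b then 0 else if c then of_real (a * fact a / 2 ^ (a + 1)) else of_real (fact a / 2 ^ a))"

lemma has_bochner_integral_site_integrand:
  "has_bochner_integral lborel (site_integrand c a b) (site_moment c a b)"
proof (cases c)
  case True
  have "site_integrand c a b = (\<lambda>z. of_real (gauss_weight z) * z ^ (a + 1) * cnj z ^ (b + 1) -
      1 / 2 * (of_real (gauss_weight z) * z ^ a * cnj z ^ b))"
    using True by (auto simp: site_integrand_def fun_eq_iff algebra_simps)
  moreover have "site_moment c a b = (if a + 1 = b + 1 then of_real (fact (a + 1) / 2 ^ (a + 1)) else 0)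
      - 1 / 2 * (if a = b then of_real (fact a / 2 ^ a) else 0)"
    using True by (auto simp: site_moment_def field_simps)
  ultimately show ?thesis
    by (simp only: has_bochner_integral_diff has_bochner_integral_mult_right
        has_bochner_integral_gauss_weight_monomial)
next
  case False
  then have "site_integrand c a b = (\<lambda>z. of_real (gauss_weight z) * z ^ a * cnj z ^ b)"
    by (simp add: site_integrand_def fun_eq_iff)
  with False show ?thesis
    using has_bochner_integral_gauss_weight_monomial[of a b]
    by (cases "a = b") (simp_all add: site_moment_def)
qed

lemma site_moment_eq_0_iff: "site_moment c a b = 0 \<longleftrightarrow> a \<noteq> b \<or> (c \<and> a = 0)"
  by (simp add: site_moment_def)

section \<open>Fibres and permutations\<close>

lemma prod_eq_prod_power_card_fiber:
  assumes "finite S" "finite K" "f ` S \<subseteq> K"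
  shows "(\<Prod>j\<in>S. h (f j)) = (\<Prod>k\<in>K. h k ^ card {j\<in>S. f j = k})"
proof -
  have "(\<Prod>j\<in>S. h (f j)) = (\<Prod>k\<in>K. \<Prod>j\<in>{j\<in>S. f j = k}. h (f j))"
    by (rule prod.group[symmetric, OF assms])
  also have "\<dots> = (\<Prod>k\<in>K. h k ^ card {j\<in>S. f j = k})"
  proof (rule prod.cong[OF refl])
    fix k
    have "(\<Prod>j\<in>{j\<in>S. f j = k}. h (f j)) = (\<Prod>j\<in>{j\<in>S. f j = k}. h k)"
      by (rule prod.cong) auto
    then show "(\<Prod>j\<in>{j\<in>S. f j = k}. h (f j)) = h k ^ card {j\<in>S. f j = k}"
      by simp
  qed
  finally show ?thesis .
qed

lemma subset_image_imp_bij_betw: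
  assumes "finite J" "S \<subseteq> J" "J \<subseteq> f ` S"
  shows "S = J" "bij_betw f J J"
proof -
  have finite_S: "finite S"
    using finite_subset[OF assms(2,1)] .
  have "card J \<le> card (f ` S)"
    by (rule card_mono[OF finite_imageI[OF finite_S] assms(3)])
  also have "\<dots> \<le> card S"
    by (rule card_image_le[OF finite_S])
  finally have "card S = card J"
    using card_mono[OF assms(1,2)] by linarith
  then show S_eq: "S = J"
    using card_subset_eq[OF assms(1,2)] by blast
  have "card (f ` J) = card J" and image_eq: "f ` J = J"
    using assms(1,3) card_image_le[OF assms(1), of f] card_mono[OF finite_imageI[OF assms(1)], of J f]
      card_subset_eq[OF finite_imageI[OF assms(1)], of J f]
    unfolding S_eq by (auto intro: le_antisym)
  then have "inj_on f J"
    using assms(1) eq_card_imp_inj_on by blast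
  with image_eq show "bij_betw f J J"
    by (simp add: bij_betw_def)
qed

lemma card_fiber_bij_betw:
  assumes "bij_betw f J J"
  shows "card {j\<in>J. f j = k} = (if k \<in> J then 1 else 0)"
proof (cases "k \<in> J")
  case True
  then obtain j where "j \<in> J" "f j = k"
    using assms by (metis bij_betw_def imageE)
  then have "{i\<in>J. f i = k} = {j}"
    using assms by (auto simp: bij_betw_def inj_on_def)
  with True show ?thesis by simp
next
  case False
  then have empty_fiber: "{j\<in>J. f j = k} = {}"
    using assms by (auto simp: bij_betw_def)
  show ?thesis
    unfolding empty_fiber using False by simp
qed

lemma card_fiber_eq_0_iff:
  "finite S \<Longrightarrow> card {j\<in>S. f j = k} = 0 \<longleftrightarrow> k \<notin> f ` S"
  by (simp add: card_0_eq) blast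

lemma prod_site_moment_fibers:
  assumes "finite K" "J \<subseteq> K" "S \<subseteq> J" "f ` S \<subseteq> K" "g ` S \<subseteq> K"
  shows "(\<Prod>k\<in>K. site_moment (k \<in> J) (card {j\<in>S. f j = k}) (card {j\<in>S. g j = k}))
     = (if S = J \<and> bij_betw f J J \<and> bij_betw g J J then (1 / 4) ^ card J else 0)"
proof (cases "S = J \<and> bij_betw f J J \<and> bij_betw g J J")
  case True
  then have "(\<Prod>k\<in>K. site_moment (k \<in> J) (card {j\<in>S. f j = k}) (card {j\<in>S. g j = k}))
      = (\<Prod>k\<in>K. if k \<in> J then 1 / 4 else 1)"
    by (intro prod.cong refl) (simp add: card_fiber_bij_betw site_moment_def)
  also have "\<dots> = (1 / 4) ^ card J"
    using assms by (simp add: prod.If_cases Int_absorb1)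
  also have "\<dots> = (if S = J \<and> bij_betw f J J \<and> bij_betw g J J then (1 / 4) ^ card J else 0)"
    using True by (rule if_P[symmetric])
  finally show ?thesis .
next
  case False
  have finite_J: "finite J"
    using finite_subset[OF assms(2,1)] .
  have finite_S: "finite S"
    using finite_subset[OF assms(3) finite_J] .
  have "\<exists>k\<in>K. site_moment (k \<in> J) (card {j\<in>S. f j = k}) (card {j\<in>S. g j = k}) = 0"
  proof (rule ccontr)
    assume no_zero_factor: "\<not> ?thesis"
    have "card {j\<in>S. f j = k} \<noteq> 0 \<and> card {j\<in>S. g j = k} \<noteq> 0" if "k \<in> J" for k
    proof -
      have "k \<in> K"
        using that assms(2) by blast
      with no_zero_factor that
      have "site_moment True (card {j\<in>S. f j = k}) (card {j\<in>S. g j = k}) \<noteq> 0"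
        by auto
      then show ?thesis
        by (simp add: site_moment_eq_0_iff)
    qed
    then have "J \<subseteq> f ` S" "J \<subseteq> g ` S"
      by (auto simp: card_fiber_eq_0_iff[OF finite_S])
    then have "S = J" "bij_betw f J J" "bij_betw g J J"
      using subset_image_imp_bij_betw[OF finite_J assms(3)] by blast+
    with False show False
      by blast
  qed
  then have "(\<Prod>k\<in>K. site_moment (k \<in> J) (card {j\<in>S. f j = k}) (card {j\<in>S. g j = k})) = 0"
    by (rule prod_zero[OF assms(1)])
  then show ?thesis
    by (simp only: if_not_P[OF False])
qed

lemma sum_bij_betw_PiE_eq_sum_permutes:
  assumes "J \<subseteq> K" "finite J"
  shows "(\<Sum>f\<in>{f\<in>J \<rightarrow>\<^sub>E K. bij_betw f J J}. \<Prod>j\<in>J. U (f j) j)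
     = (\<Sum>\<sigma> | \<sigma> permutes J. \<Prod>j\<in>J. U j (\<sigma> j))"
proof -
  have bijections: "{f\<in>J \<rightarrow>\<^sub>E K. bij_betw f J J} = (\<lambda>\<sigma>. restrict \<sigma> J) ` {\<sigma>. \<sigma> permutes J}"
  proof (intro equalityI subsetI)
    fix f assume "f \<in> {f\<in>J \<rightarrow>\<^sub>E K. bij_betw f J J}"
    then have f: "f \<in> J \<rightarrow>\<^sub>E K" and bij: "bij_betw f J J"
      by auto
    define \<sigma> where "\<sigma> x = (if x \<in> J then f x else x)" for x
    have "bij_betw \<sigma> J J"
      using bij by (rule bij_betw_cong[THEN iffD1, rotated]) (simp add: \<sigma>_def)
    then have "\<sigma> permutes J"
      by (rule bij_imp_permutes) (simp add: \<sigma>_def)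
    moreover have "restrict \<sigma> J = f"
      using f by (auto simp: \<sigma>_def restrict_def PiE_def extensional_def fun_eq_iff)
    ultimately show "f \<in> (\<lambda>\<sigma>. restrict \<sigma> J) ` {\<sigma>. \<sigma> permutes J}"
      by blast
  next
    fix f assume "f \<in> (\<lambda>\<sigma>. restrict \<sigma> J) ` {\<sigma>. \<sigma> permutes J}"
    then obtain \<sigma> where \<sigma>: "\<sigma> permutes J" and f: "f = restrict \<sigma> J"
      by auto
    have "bij_betw f J J"
      unfolding f using permutes_imp_bij[OF \<sigma>] by (rule bij_betw_cong[THEN iffD1, rotated]) simp
    moreover have "f \<in> J \<rightarrow>\<^sub>E K"
      using \<sigma> assms(1) f by (auto simp: permutes_in_image)
    ultimately show "f \<in> {f\<in>J \<rightarrow>\<^sub>E K. bij_betw f J J}"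
      by simp
  qed
  have "inj_on (\<lambda>\<sigma>. restrict \<sigma> J) {\<sigma>. \<sigma> permutes J}"
  proof (rule inj_onI, rule ext)
    fix \<sigma> \<tau> x assume "\<sigma> \<in> {\<sigma>. \<sigma> permutes J}" "\<tau> \<in> {\<sigma>. \<sigma> permutes J}"
      and "restrict \<sigma> J = restrict \<tau> J"
    then show "\<sigma> x = \<tau> x"
      by (cases "x \<in> J") (metis restrict_apply', simp add: permutes_not_in)
  qed
  then have "(\<Sum>f\<in>{f\<in>J \<rightarrow>\<^sub>E K. bij_betw f J J}. \<Prod>j\<in>J. U (f j) j)
      = (\<Sum>\<sigma> | \<sigma> permutes J. \<Prod>j\<in>J. U (\<sigma> j) j)"
    unfolding bijections by (subst sum.reindex) (auto intro!: sum.cong prod.cong)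
  also have "\<dots> = (\<Sum>\<sigma> | \<sigma> permutes J. \<Prod>j\<in>J. U (inv \<sigma> j) j)"
    by (rule sum_permutations_inverse)
  also have "\<dots> = (\<Sum>\<sigma> | \<sigma> permutes J. \<Prod>j\<in>J. U j (\<sigma> j))"
  proof (rule sum.cong[OF refl])
    fix \<sigma> assume "\<sigma> \<in> {\<sigma>. \<sigma> permutes J}"
    then have \<sigma>: "\<sigma> permutes J" by simp
    have "(\<Prod>j\<in>J. U j (\<sigma> j)) = (\<Prod>j\<in>J. U (inv \<sigma> j) (\<sigma> (inv \<sigma> j)))"
      using prod.permute[OF permutes_inv[OF \<sigma>], of "\<lambda>j. U j (\<sigma> j)"] by (simp add: o_def)
    then show "(\<Prod>j\<in>J. U (inv \<sigma> j) j) = (\<Prod>j\<in>J. U j (\<sigma> j))"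
      by (simp add: permutes_inverses[OF \<sigma>])
  qed
  finally show ?thesis .
qed

section \<open>Expansion of the integrand\<close>

text \<open>
  \<open>S\<close> is the set of columns \<open>j\<close> for which \<open>4 |\<beta>\<^sub>j|\<^sup>2\<close> rather than \<open>-1\<close> is
  taken, and \<open>f j\<close>, \<open>g j\<close> select the summands of \<open>\<beta>\<^sub>j\<close> and of its conjugate.
\<close>

definition expansion_coeff ::
    "'i set \<Rightarrow> ('i \<Rightarrow> 'i \<Rightarrow> complex) \<Rightarrow> 'i set \<Rightarrow> ('i \<Rightarrow> 'i) \<Rightarrow> ('i \<Rightarrow> 'i) \<Rightarrow> complex" where
  "expansion_coeff J U S f g =
     (- 1) ^ card (J - S) * 4 ^ card S * (\<Prod>j\<in>S. U (f j) j) * (\<Prod>j\<in>S. cnj (U (g j) j))"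

lemma prod_site_integrand_fibers:
  assumes "finite K" "J \<subseteq> K" "S \<subseteq> J" "f ` S \<subseteq> K" "g ` S \<subseteq> K"
  shows "(\<Prod>k\<in>K. site_integrand (k \<in> J) (card {j\<in>S. f j = k}) (card {j\<in>S. g j = k}) (\<alpha> k))
     = (\<Prod>k\<in>K. of_real (gauss_weight (\<alpha> k))) * (\<Prod>j\<in>S. \<alpha> (f j)) * (\<Prod>j\<in>S. cnj (\<alpha> (g j)))
       * (\<Prod>j\<in>J. \<alpha> j * cnj (\<alpha> j) - 1 / 2)"
proof -
  have finite_S: "finite S"
    using finite_subset[OF assms(3) finite_subset[OF assms(2,1)]] .
  have "(\<Prod>j\<in>J. \<alpha> j * cnj (\<alpha> j) - 1 / 2) = (\<Prod>k\<in>K. if k \<in> J then \<alpha> k * cnj (\<alpha> k) - 1 / 2 else 1)"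
    using assms(1,2) by (simp add: prod.If_cases Int_absorb1)
  then show ?thesis
    unfolding prod_eq_prod_power_card_fiber[OF finite_S assms(1) assms(4), of \<alpha>]
      prod_eq_prod_power_card_fiber[OF finite_S assms(1) assms(5), of "\<lambda>k. cnj (\<alpha> k)"]
    by (simp add: site_integrand_def prod.distrib)
qed

lemma prod_column_sums_expansion:
  fixes J K :: "'i set" and \<alpha> :: "'i \<Rightarrow> complex" and U :: "'i \<Rightarrow> 'i \<Rightarrow> complex"
  assumes "finite K" "finite J"
  defines "\<beta> j \<equiv> \<Sum>k\<in>K. \<alpha> k * U k j"
  shows "(\<Prod>j\<in>J. 4 * \<beta> j * cnj (\<beta> j) - 1)
     = (\<Sum>S\<in>Pow J. \<Sum>f\<in>S \<rightarrow>\<^sub>E K. \<Sum>g\<in>S \<rightarrow>\<^sub>E K.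
          expansion_coeff J U S f g * ((\<Prod>j\<in>S. \<alpha> (f j)) * (\<Prod>j\<in>S. cnj (\<alpha> (g j)))))"
proof -
  have prod_\<beta>: "(\<Prod>j\<in>S. \<beta> j) = (\<Sum>f\<in>S \<rightarrow>\<^sub>E K. (\<Prod>j\<in>S. \<alpha> (f j)) * (\<Prod>j\<in>S. U (f j) j))"
    and prod_cnj_\<beta>: "(\<Prod>j\<in>S. cnj (\<beta> j)) =
      (\<Sum>g\<in>S \<rightarrow>\<^sub>E K. (\<Prod>j\<in>S. cnj (\<alpha> (g j))) * (\<Prod>j\<in>S. cnj (U (g j) j)))" if "finite S" for S
    using that assms(1) by (simp_all add: \<beta>_def prod_sum_PiE prod.distrib cnj_sum)
  have "(\<Prod>j\<in>J. 4 * \<beta> j * cnj (\<beta> j) - 1)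
      = (\<Sum>S\<in>Pow J. (- 1) ^ card (J - S) * 4 ^ card S * ((\<Prod>j\<in>S. \<beta> j) * (\<Prod>j\<in>S. cnj (\<beta> j))))"
    unfolding diff_conv_add_uminus prod_add[OF assms(2)]
    by (intro sum.cong refl) (simp add: prod.distrib mult_ac)
  also have "\<dots> = (\<Sum>S\<in>Pow J. \<Sum>f\<in>S \<rightarrow>\<^sub>E K. \<Sum>g\<in>S \<rightarrow>\<^sub>E K.
          expansion_coeff J U S f g * ((\<Prod>j\<in>S. \<alpha> (f j)) * (\<Prod>j\<in>S. cnj (\<alpha> (g j)))))"
  proof (rule sum.cong[OF refl])
    fix S assume "S \<in> Pow J"
    then have "finite S"
      using assms(2) finite_subset by auto
    show "(- 1) ^ card (J - S) * 4 ^ card S * ((\<Prod>j\<in>S. \<beta> j) * (\<Prod>j\<in>S. cnj (\<beta> j)))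
        = (\<Sum>f\<in>S \<rightarrow>\<^sub>E K. \<Sum>g\<in>S \<rightarrow>\<^sub>E K.
          expansion_coeff J U S f g * ((\<Prod>j\<in>S. \<alpha> (f j)) * (\<Prod>j\<in>S. cnj (\<alpha> (g j)))))"
      unfolding prod_\<beta>[OF \<open>finite S\<close>] prod_cnj_\<beta>[OF \<open>finite S\<close>] sum_product
      unfolding sum_distrib_left
      by (intro sum.cong refl) (simp add: expansion_coeff_def mult_ac)
  qed
  finally show ?thesis .
qed

lemma integrand_expansion:
  fixes J K :: "'i set" and \<alpha> :: "'i \<Rightarrow> complex" and U :: "'i \<Rightarrow> 'i \<Rightarrow> complex"
  assumes "finite K" "J \<subseteq> K"
  defines "\<beta> j \<equiv> \<Sum>k\<in>K. \<alpha> k * U k j"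
  shows "(\<Prod>k\<in>K. of_real (gauss_weight (\<alpha> k))) * (\<Prod>j\<in>J. 4 * \<beta> j * cnj (\<beta> j) - 1)
       * (\<Prod>j\<in>J. \<alpha> j * cnj (\<alpha> j) - 1 / 2)
     = (\<Sum>S\<in>Pow J. \<Sum>f\<in>S \<rightarrow>\<^sub>E K. \<Sum>g\<in>S \<rightarrow>\<^sub>E K. expansion_coeff J U S f g *
         (\<Prod>k\<in>K. site_integrand (k \<in> J) (card {j\<in>S. f j = k}) (card {j\<in>S. g j = k}) (\<alpha> k)))"
proof -
  define W where "W = (\<Prod>k\<in>K. of_real (gauss_weight (\<alpha> k)) :: complex)"
  define L where "L = (\<Prod>j\<in>J. \<alpha> j * cnj (\<alpha> j) - 1 / 2)"
  have "W * (\<Prod>j\<in>J. 4 * \<beta> j * cnj (\<beta> j) - 1) * L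
      = (\<Sum>S\<in>Pow J. \<Sum>f\<in>S \<rightarrow>\<^sub>E K. \<Sum>g\<in>S \<rightarrow>\<^sub>E K. expansion_coeff J U S f g *
          (W * (\<Prod>j\<in>S. \<alpha> (f j)) * (\<Prod>j\<in>S. cnj (\<alpha> (g j))) * L))"
    unfolding \<beta>_def prod_column_sums_expansion[OF assms(1) finite_subset[OF assms(2,1)]]
    by (simp add: sum_distrib_left sum_distrib_right mult_ac)
  also have "\<dots> = (\<Sum>S\<in>Pow J. \<Sum>f\<in>S \<rightarrow>\<^sub>E K. \<Sum>g\<in>S \<rightarrow>\<^sub>E K. expansion_coeff J U S f g *
         (\<Prod>k\<in>K. site_integrand (k \<in> J) (card {j\<in>S. f j = k}) (card {j\<in>S. g j = k}) (\<alpha> k)))"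
  proof (intro sum.cong refl)
    fix S f g assume "S \<in> Pow J" "f \<in> S \<rightarrow>\<^sub>E K" "g \<in> S \<rightarrow>\<^sub>E K"
    then have "W * (\<Prod>j\<in>S. \<alpha> (f j)) * (\<Prod>j\<in>S. cnj (\<alpha> (g j))) * L
        = (\<Prod>k\<in>K. site_integrand (k \<in> J) (card {j\<in>S. f j = k}) (card {j\<in>S. g j = k}) (\<alpha> k))"
      unfolding W_def L_def using assms(1,2)
      by (intro prod_site_integrand_fibers[symmetric]) auto
    then show "expansion_coeff J U S f g * (W * (\<Prod>j\<in>S. \<alpha> (f j)) * (\<Prod>j\<in>S. cnj (\<alpha> (g j))) * L)
        = expansion_coeff J U S f g *
          (\<Prod>k\<in>K. site_integrand (k \<in> J) (card {j\<in>S. f j = k}) (card {j\<in>S. g j = k}) (\<alpha> k))"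
      by simp
  qed
  finally show ?thesis
    by (simp only: W_def L_def)
qed

lemma has_bochner_integral_prod_site_integrand:
  assumes "finite K"
  shows "has_bochner_integral (\<Pi>\<^sub>M k\<in>K. lborel)
     (\<lambda>\<alpha>. \<Prod>k\<in>K. site_integrand (c k) (a k) (b k) (\<alpha> k)) (\<Prod>k\<in>K. site_moment (c k) (a k) (b k))"
proof -
  interpret product_sigma_finite "\<lambda>_::'i. lborel :: complex measure"
    by unfold_locales
  have "integral\<^sup>L lborel (site_integrand (c k) (a k) (b k)) = site_moment (c k) (a k) (b k)"
    and "integrable lborel (site_integrand (c k) (a k) (b k))" for k
    using has_bochner_integral_site_integrand by (auto simp: has_bochner_integral_iff)
  with assms show ?thesis
    unfolding has_bochner_integral_iff
    using product_integrable_prod[of K "\<lambda>k. site_integrand (c k) (a k) (b k)"]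
      product_integral_prod[of K "\<lambda>k. site_integrand (c k) (a k) (b k)"]
    by simp
qed

lemma sum_expansion_coeff_bijections:
  fixes J K :: "'i set" and U :: "'i \<Rightarrow> 'i \<Rightarrow> complex"
  assumes "finite J" "finite K"
  defines "p \<equiv> \<Sum>f\<in>{f\<in>J \<rightarrow>\<^sub>E K. bij_betw f J J}. \<Prod>j\<in>J. U (f j) j"
  shows "(\<Sum>S\<in>Pow J. \<Sum>f\<in>S \<rightarrow>\<^sub>E K. \<Sum>g\<in>S \<rightarrow>\<^sub>E K. expansion_coeff J U S f g *
           (if S = J \<and> bij_betw f J J \<and> bij_betw g J J then (1 / 4) ^ card J else 0)) = p * cnj p"
proof -
  define X where "X f g = (\<Prod>j\<in>J. U (f j) j) * (\<Prod>j\<in>J. cnj (U (g j) j))" for f g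
  have finite_PiE_J: "finite (J \<rightarrow>\<^sub>E K)"
    using assms(1,2) by (rule finite_PiE)
  have "(4 :: complex) ^ card J * (1 / 4) ^ card J = 1"
    by (simp flip: power_mult_distrib)
  then have coeff_J: "expansion_coeff J U J f g * (1 / 4) ^ card J = X f g" for f g
    by (simp add: expansion_coeff_def X_def mult_ac)
  have "(\<Sum>S\<in>Pow J. \<Sum>f\<in>S \<rightarrow>\<^sub>E K. \<Sum>g\<in>S \<rightarrow>\<^sub>E K. expansion_coeff J U S f g *
           (if S = J \<and> bij_betw f J J \<and> bij_betw g J J then (1 / 4) ^ card J else 0))
      = (\<Sum>S\<in>{J}. \<Sum>f\<in>S \<rightarrow>\<^sub>E K. \<Sum>g\<in>S \<rightarrow>\<^sub>E K. expansion_coeff J U S f g *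
           (if S = J \<and> bij_betw f J J \<and> bij_betw g J J then (1 / 4) ^ card J else 0))"
    by (rule sum.mono_neutral_right) (auto simp: assms(1))
  also have "\<dots> = (\<Sum>f\<in>J \<rightarrow>\<^sub>E K. \<Sum>g\<in>J \<rightarrow>\<^sub>E K. expansion_coeff J U J f g *
           (if bij_betw f J J \<and> bij_betw g J J then (1 / 4) ^ card J else 0))"
    by simp
  also have "\<dots> = (\<Sum>f\<in>J \<rightarrow>\<^sub>E K.
      if bij_betw f J J then \<Sum>g\<in>J \<rightarrow>\<^sub>E K. if bij_betw g J J then X f g else 0 else 0)"
    by (intro sum.cong refl) (auto simp: coeff_J intro!: sum.cong)
  also have "\<dots> = (\<Sum>f\<in>{f\<in>J \<rightarrow>\<^sub>E K. bij_betw f J J}. \<Sum>g\<in>{g\<in>J \<rightarrow>\<^sub>E K. bij_betw g J J}. X f g)"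
    by (simp add: sum.inter_filter finite_PiE_J)
  also have "\<dots> = p * cnj p"
    unfolding p_def X_def cnj_sum cnj_prod sum_product ..
  finally show ?thesis .
qed

lemma prod_gauss_weight:
  assumes "finite K"
  shows "(\<Prod>k\<in>K. gauss_weight (\<alpha> k)) = (2 / pi) ^ card K * exp (- 2 * (\<Sum>k\<in>K. (cmod (\<alpha> k))\<^sup>2))"
proof -
  have "(\<Prod>k\<in>K. gauss_weight (\<alpha> k)) = (\<Prod>k\<in>K. 2 / pi) * (\<Prod>k\<in>K. exp (- 2 * (cmod (\<alpha> k))\<^sup>2))"
    unfolding gauss_weight_def by (rule prod.distrib)
  also have "\<dots> = (2 / pi) ^ card K * exp (- 2 * (\<Sum>k\<in>K. (cmod (\<alpha> k))\<^sup>2))"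
    by (simp only: prod_constant sum_distrib_left exp_sum[OF assms])
  finally show ?thesis .
qed

lemma integral_gauss_weight_permanent:
  fixes J K :: "'i set" and U :: "'i \<Rightarrow> 'i \<Rightarrow> complex"
  assumes "finite K" "J \<subseteq> K"
  shows "(\<integral>\<alpha>. (\<Prod>k\<in>K. gauss_weight (\<alpha> k)) *
            (\<Prod>j\<in>J. 4 * (cmod (\<Sum>k\<in>K. \<alpha> k * U k j))\<^sup>2 - 1) *
            (\<Prod>j\<in>J. (cmod (\<alpha> j))\<^sup>2 - 1 / 2) \<partial>(\<Pi>\<^sub>M k\<in>K. lborel))
     = (cmod (\<Sum>\<sigma> | \<sigma> permutes J. \<Prod>j\<in>J. U j (\<sigma> j)))\<^sup>2"
    (is "integral\<^sup>L ?M ?F = _")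
proof -
  define p where "p = (\<Sum>f\<in>{f\<in>J \<rightarrow>\<^sub>E K. bij_betw f J J}. \<Prod>j\<in>J. U (f j) j)"
  have finite_J: "finite J"
    using finite_subset[OF assms(2,1)] .
  have integrand: "(\<lambda>\<alpha>. complex_of_real (?F \<alpha>)) = (\<lambda>\<alpha>. \<Sum>S\<in>Pow J. \<Sum>f\<in>S \<rightarrow>\<^sub>E K. \<Sum>g\<in>S \<rightarrow>\<^sub>E K.
      expansion_coeff J U S f g *
      (\<Prod>k\<in>K. site_integrand (k \<in> J) (card {j\<in>S. f j = k}) (card {j\<in>S. g j = k}) (\<alpha> k)))"
  proof
    fix \<alpha> :: "'i \<Rightarrow> complex"
    show "complex_of_real (?F \<alpha>) = (\<Sum>S\<in>Pow J. \<Sum>f\<in>S \<rightarrow>\<^sub>E K. \<Sum>g\<in>S \<rightarrow>\<^sub>E K.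
      expansion_coeff J U S f g *
      (\<Prod>k\<in>K. site_integrand (k \<in> J) (card {j\<in>S. f j = k}) (card {j\<in>S. g j = k}) (\<alpha> k)))"
      unfolding integrand_expansion[OF assms, symmetric]
      by (simp only: of_real_mult of_real_prod of_real_diff of_real_divide of_real_1 of_real_numeral
          complex_norm_square mult.assoc)
  qed
  have "has_bochner_integral ?M (\<lambda>\<alpha>. complex_of_real (?F \<alpha>))
      (\<Sum>S\<in>Pow J. \<Sum>f\<in>S \<rightarrow>\<^sub>E K. \<Sum>g\<in>S \<rightarrow>\<^sub>E K. expansion_coeff J U S f g *
         (\<Prod>k\<in>K. site_moment (k \<in> J) (card {j\<in>S. f j = k}) (card {j\<in>S. g j = k})))"
    unfolding integrand
    by (intro has_bochner_integral_sum has_bochner_integral_mult_right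
        has_bochner_integral_prod_site_integrand assms(1))
  then have "of_real (integral\<^sup>L ?M ?F)
      = (\<Sum>S\<in>Pow J. \<Sum>f\<in>S \<rightarrow>\<^sub>E K. \<Sum>g\<in>S \<rightarrow>\<^sub>E K. expansion_coeff J U S f g *
         (\<Prod>k\<in>K. site_moment (k \<in> J) (card {j\<in>S. f j = k}) (card {j\<in>S. g j = k})))"
    unfolding integral_complex_of_real[symmetric] by (rule has_bochner_integral_integral_eq)
  also have "\<dots> = (\<Sum>S\<in>Pow J. \<Sum>f\<in>S \<rightarrow>\<^sub>E K. \<Sum>g\<in>S \<rightarrow>\<^sub>E K. expansion_coeff J U S f g *
         (if S = J \<and> bij_betw f J J \<and> bij_betw g J J then (1 / 4) ^ card J else 0))"
    using assms by (intro sum.cong refl arg_cong[where f = "(*) _"] prod_site_moment_fibers) auto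
  also have "\<dots> = p * cnj p"
    unfolding p_def by (rule sum_expansion_coeff_bijections[OF finite_J assms(1)])
  also have "\<dots> = of_real ((cmod p)\<^sup>2)"
    by (rule complex_norm_square[symmetric])
  finally have "integral\<^sup>L ?M ?F = (cmod p)\<^sup>2"
    using of_real_eq_iff by blast
  then show ?thesis
    unfolding p_def sum_bij_betw_PiE_eq_sum_permutes[OF assms(2) finite_J] .
qed

theorem mainTheorem1:
  fixes n m :: nat and U :: "nat \<Rightarrow> nat \<Rightarrow> complex"
  assumes "1 \<le> n" and "n \<le> m" and "unitary_mat m U"
  shows "(2 / pi) ^ m *
    (\<integral>\<alpha>. exp (- 2 * (\<Sum>k=1..m. (cmod (\<alpha> k))\<^sup>2)) *
          (\<Prod>j=1..n. 4 * (cmod (\<Sum>k=1..m. \<alpha> k * U k j))\<^sup>2 - 1) *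
          (\<Prod>j=1..n. (cmod (\<alpha> j))\<^sup>2 - 1 / 2)
      \<partial>(PiM {1..m} (\<lambda>_. (lborel :: complex measure))))
    = (cmod (perm_sub n U))\<^sup>2"
proof -
  have "(2 / pi) ^ m *
      (\<integral>\<alpha>. exp (- 2 * (\<Sum>k=1..m. (cmod (\<alpha> k))\<^sup>2)) *
          (\<Prod>j=1..n. 4 * (cmod (\<Sum>k=1..m. \<alpha> k * U k j))\<^sup>2 - 1) *
          (\<Prod>j=1..n. (cmod (\<alpha> j))\<^sup>2 - 1 / 2) \<partial>(PiM {1..m} (\<lambda>_. lborel)))
    = (\<integral>\<alpha>. (\<Prod>k=1..m. gauss_weight (\<alpha> k)) *
          (\<Prod>j=1..n. 4 * (cmod (\<Sum>k=1..m. \<alpha> k * U k j))\<^sup>2 - 1) *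
          (\<Prod>j=1..n. (cmod (\<alpha> j))\<^sup>2 - 1 / 2) \<partial>(PiM {1..m} (\<lambda>_. lborel)))"
    unfolding integral_mult_right_zero[symmetric]
    by (rule Bochner_Integration.integral_cong[OF refl]) (simp add: prod_gauss_weight mult.assoc)
  also have "\<dots> = (cmod (\<Sum>\<sigma> | \<sigma> permutes {1..n}. \<Prod>j=1..n. U j (\<sigma> j)))\<^sup>2"
    using assms(2) by (intro integral_gauss_weight_permanent) auto
  also have "\<dots> = (cmod (perm_sub n U))\<^sup>2"
    by (simp only: perm_sub_def)
  finally show ?thesis .
qed

end
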